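(* Assume the Bellman setting below and hypotheses (H3) and (H4). Let $U$ be a solution of the Bellman problem. Then there exists a sequence $(P^\ell)_\ell$ in $\mathcal P$ such that $-A(P^\ell)U+y(P^\ell)\to0$ as $\ell\to\infty$ and $A(P^\ell)$ is a nonsingular M-matrix for every $\ell$.
   Context: Bellman setting: Let $M\ge 0$ be an integer and $\mathcal P=\mathcal P_0\times\cdots\times\mathcal P_M$ a product of nonempty sets; write $P=(P_0,\dots,P_M)\in\mathcal P$. Let $A:\mathcal P\to\mathbb R^{(M+1)\times(M+1)}$ and $y:\mathcal P\to\mathbb R^{M+1}$ be row-decoupled: for each $i$, the $i$-th row of $A(P)$ and the $i$-th entry of $y(P)$ depend only on $P_i$. Inequalities between vectors are entrywise and suprema of families of vectors are entrywise. The Bellman problem is to find $U$ with $\sup_{P\in\mathcal P}\{-A(P)U+y(P)\}=0$. Row $i$ of a matrix $(a_{ij})$ is strictly diagonally dominant (s.d.d.) if $|a_{ii}|>\sum_{j\ne i}|a_{ij}|$, weakly diagonally dominant (w.d.d.) if $|a_{ii}|\ge\sum_{j\ne i}|a_{ij}|$; a matrix is w.d.d. if all rows are. A Z-matrix is a real matrix with nonpositive off-diagonal entries; a nonsingular M-matrix is a Z-matrix that is nonsingular with entrywise nonnegative inverse. (H3): for each $P$, $A(P)$ is a w.d.d. Z-matrix with nonnegative diagonal entries, and $[A(P)]_{ii}\le1$ whenever row $i$ of $A(P)$ is not s.d.d. Define $[\hat y(P)]_i=[y(P)]_i$ if row $i$ of $A(P)$ is not s.d.d. and $[\hat y(P)]_i=-\infty$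 otherwise, and the operator $\mathbb M$ on vectors with entries in $[-\infty,\infty)$ by $[\mathbb M X]_i=\sup_{P\in\mathcal P}\{(1-[A(P)]_{ii})X_i-\sum_{j\ne i}[A(P)]_{ij}X_j+[\hat y(P)]_i\}$, with the conventions $0\cdot(-\infty)=0$ and that any sum containing $-\infty$ equals $-\infty$; $\mathbb M^0=I$, $\mathbb M^k=\mathbb M\circ\mathbb M^{k-1}$. (H4): for each $U\in\mathbb R^{M+1}$ and each $i$ there exist integers $0\le m_1<m_2$ with $[\mathbb M^{m_1}U]_i>[\mathbb M^{m_2}U]_i$. *)

theory Defs
  imports "HOL-Analysis.Analysis" "HOL-Library.Extended_Real"
begin

text \<open>Indices 0..M are modelled by a finite type 'n (so M+1 = CARD('n)).
  A policy P in the product set is a function 'n => 'p with P i in Ps i.\<close>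

definition policies :: "('n \<Rightarrow> 'p set) \<Rightarrow> ('n \<Rightarrow> 'p) set" where
  "policies Ps = {P. \<forall>i. P i \<in> Ps i}"

definition sdd_row :: "real^'n^'n \<Rightarrow> 'n::finite \<Rightarrow> bool" where
  "sdd_row A i \<longleftrightarrow> (\<Sum>j\<in>UNIV - {i}. \<bar>A$i$j\<bar>) < \<bar>A$i$i\<bar>"

definition wdd_row :: "real^'n^'n \<Rightarrow> 'n::finite \<Rightarrow> bool" where
  "wdd_row A i \<longleftrightarrow> (\<Sum>j\<in>UNIV - {i}. \<bar>A$i$j\<bar>) \<le> \<bar>A$i$i\<bar>"

definition Z_matrix :: "real^'n^'n \<Rightarrow> bool" where
  "Z_matrix A \<longleftrightarrow> (\<forall>i j. i \<noteq> j \<longrightarrow> A$i$j \<le> 0)"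

definition nonsingular_M_matrix :: "real^'n^'n \<Rightarrow> bool" where
  "nonsingular_M_matrix A \<longleftrightarrow>
     Z_matrix A \<and> invertible A \<and> (\<forall>i j. 0 \<le> matrix_inv A $ i $ j)"

definition yhat :: "(('n \<Rightarrow> 'p) \<Rightarrow> real^'n^'n) \<Rightarrow> (('n \<Rightarrow> 'p) \<Rightarrow> real^'n)
    \<Rightarrow> ('n \<Rightarrow> 'p) \<Rightarrow> 'n::finite \<Rightarrow> ereal" where
  "yhat A y P i = (if sdd_row (A P) i then -\<infinity> else ereal (y P $ i))"

text \<open>The expression inside the supremum defining the operator M, with the
  conventions 0 * (-inf) = 0 (built into ereal) and that any sum containing
  -inf equals -inf.\<close>
definition Mterm :: "(('n \<Rightarrow> 'p) \<Rightarrow> real^'n^'n) \<Rightarrow> (('n \<Rightarrow> 'p) \<Rightarrow> real^'n)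
    \<Rightarrow> ('n \<Rightarrow> 'p) \<Rightarrow> ('n \<Rightarrow> ereal) \<Rightarrow> 'n::finite \<Rightarrow> ereal" where
  "Mterm A y P X i =
    (let ts = (\<lambda>j. ereal (if j = i then 1 - A P $ i $ i else - A P $ i $ j) * X j)
     in if yhat A y P i = -\<infinity> \<or> (\<exists>j. ts j = -\<infinity>) then -\<infinity>
        else (\<Sum>j\<in>UNIV. ts j) + yhat A y P i)"

definition Mop :: "('n \<Rightarrow> 'p set) \<Rightarrow> (('n \<Rightarrow> 'p) \<Rightarrow> real^'n^'n) \<Rightarrow> (('n \<Rightarrow> 'p) \<Rightarrow> real^'n)
    \<Rightarrow> ('n \<Rightarrow> ereal) \<Rightarrow> 'n::finite \<Rightarrow> ereal" where
  "Mop Ps A y X i = (SUP P\<in>policies Ps. Mterm A y P X i)"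

end

theory Submission
  imports Defs
begin

text \<open>A row of a w.d.d. Z-matrix that is not s.d.d. has row sum zero, so the corresponding row
  of I - A(P) is a probability vector and M averages over it. Since U solves the Bellman
  problem, the iterates M^k U never exceed U, and by (H4) each entry i eventually drops below
  U_i - k_i e for one uniform e > 0. Let P be d-optimal with d \<le> e, i.e. -A(P)U + y(P) \<ge> -d.
  If A(P) had a nonempty set J of non-s.d.d. rows without entries leading out of J, the
  single policy P would keep M^k U \<ge> U - k d on J, contradicting the drop. Without such a set
  a w.d.d. Z-matrix with nonnegative diagonal is a nonsingular M-matrix by the discrete
  minimum principle (Ax \<ge> 0 implies x \<ge> 0). As the rows decouple, (e/(l+1))-optimal policies
  exist for every l.\<close>

text \<open>For a w.d.d. matrix, having no nonempty isolated row set is the weak chain condition: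
  every row is joined to an s.d.d. row in the graph of the matrix.\<close>

definition isolated_rows :: "real^'n^'n \<Rightarrow> 'n::finite set \<Rightarrow> bool" where
  "isolated_rows A J \<longleftrightarrow> (\<forall>k\<in>J. \<not> sdd_row A k \<and> (\<forall>j. j \<notin> J \<longrightarrow> A$k$j = 0))"

lemma Z_matrix_offdiag_abs_sum:
  fixes A :: "real^'n^'n::finite"
  assumes "Z_matrix A"
  shows "(\<Sum>j\<in>UNIV - {i}. \<bar>A$i$j\<bar>) = A$i$i - (\<Sum>j\<in>UNIV. A$i$j)"
proof -
  have "(\<Sum>j\<in>UNIV - {i}. \<bar>A$i$j\<bar>) = (\<Sum>j\<in>UNIV - {i}. - A$i$j)"
    using assms by (intro sum.cong) (auto simp: Z_matrix_def)
  also have "\<dots> = A$i$i - (\<Sum>j\<in>UNIV. A$i$j)"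
    by (simp add: sum_negf sum.remove[of UNIV i])
  finally show ?thesis .
qed

lemma Z_matrix_wdd_row_iff:
  fixes A :: "real^'n^'n::finite"
  assumes "Z_matrix A" and "0 \<le> A$i$i"
  shows "wdd_row A i \<longleftrightarrow> 0 \<le> (\<Sum>j\<in>UNIV. A$i$j)"
  using assms by (simp add: wdd_row_def Z_matrix_offdiag_abs_sum)

lemma Z_matrix_sdd_row_iff:
  fixes A :: "real^'n^'n::finite"
  assumes "Z_matrix A" and "0 \<le> A$i$i"
  shows "sdd_row A i \<longleftrightarrow> 0 < (\<Sum>j\<in>UNIV. A$i$j)"
  using assms by (simp add: sdd_row_def Z_matrix_offdiag_abs_sum)

lemma Z_matrix_mult_neg_at_minimum:
  fixes A :: "real^'n^'n::finite"
  assumes Z: "Z_matrix A" and "wdd_row A k" and "0 \<le> A$k$k"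
    and min: "\<And>j. x$k \<le> x$j" and "x$k < 0"
    and leak: "sdd_row A k \<or> (\<exists>j. x$k < x$j \<and> A$k$j \<noteq> 0)"
  shows "(A *v x)$k < 0"
proof -
  have split: "(A *v x)$k = x$k * (\<Sum>j\<in>UNIV. A$k$j) + (\<Sum>j\<in>UNIV. A$k$j * (x$j - x$k))"
    by (simp add: matrix_vector_mult_def sum_distrib_left right_diff_distrib sum_subtractf
        mult.commute)
  have term_nonpos: "A$k$j * (x$j - x$k) \<le> 0" for j
    using Z min[of j] by (cases "j = k") (simp_all add: Z_matrix_def mult_nonpos_nonneg)
  have "0 \<le> (\<Sum>j\<in>UNIV. A$k$j)"
    using assms Z_matrix_wdd_row_iff by blast
  then have first_nonpos: "x$k * (\<Sum>j\<in>UNIV. A$k$j) \<le> 0"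
    using \<open>x$k < 0\<close> by (simp add: mult_nonpos_nonneg)
  have second_nonpos: "(\<Sum>j\<in>UNIV. A$k$j * (x$j - x$k)) \<le> 0"
    by (rule sum_nonpos) (rule term_nonpos)
  from leak have "x$k * (\<Sum>j\<in>UNIV. A$k$j) < 0 \<or> (\<Sum>j\<in>UNIV. A$k$j * (x$j - x$k)) < 0"
  proof
    assume "sdd_row A k"
    then have "0 < (\<Sum>j\<in>UNIV. A$k$j)"
      using assms Z_matrix_sdd_row_iff by blast
    then show ?thesis
      using \<open>x$k < 0\<close> by (simp add: mult_neg_pos)
  next
    assume "\<exists>j. x$k < x$j \<and> A$k$j \<noteq> 0"
    then obtain j where "x$k < x$j" and "A$k$j \<noteq> 0"
      by blast
    moreover have "A$k$j < 0"
      using Z \<open>x$k < x$j\<close> \<open>A$k$j \<noteq> 0\<close>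
      by (cases "j = k") (auto simp: Z_matrix_def less_le)
    ultimately have "A$k$j * (x$j - x$k) < 0"
      by (simp add: mult_neg_pos)
    then have "(\<Sum>j\<in>UNIV. A$k$j * (x$j - x$k)) < 0"
      using sum_strict_mono_ex1[of UNIV "\<lambda>j. A$k$j * (x$j - x$k)" "\<lambda>_. 0"] term_nonpos
      by auto
    then show ?thesis ..
  qed
  then show ?thesis
    using split first_nonpos second_nonpos by linarith
qed

lemma Z_matrix_nonneg_if_mult_nonneg:
  fixes A :: "real^'n^'n::finite"
  assumes Z: "Z_matrix A" and wdd: "\<And>i. wdd_row A i" and diag: "\<And>i. 0 \<le> A$i$i"
    and no_isolated: "\<And>J. J \<noteq> {} \<Longrightarrow> \<not> isolated_rows A J"
    and Ax_nonneg: "\<And>i. 0 \<le> (A *v x)$i"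
  shows "0 \<le> x$i"
proof (rule ccontr)
  assume "\<not> 0 \<le> x$i"
  define m where "m = Min (range (\<lambda>j. x$j))"
  have m_le: "m \<le> x$j" for j
    by (simp add: m_def)
  have "m \<in> range (\<lambda>j. x$j)"
    unfolding m_def by (rule Min_in) auto
  define J where "J = {j. x$j = m}"
  have "J \<noteq> {}"
    using \<open>m \<in> range (\<lambda>j. x$j)\<close> by (auto simp: J_def)
  then obtain k where "k \<in> J" and leak: "sdd_row A k \<or> (\<exists>j. j \<notin> J \<and> A$k$j \<noteq> 0)"
    using no_isolated[of J] unfolding isolated_rows_def by blast
  then have "x$k = m"
    by (simp add: J_def)
  have "(A *v x)$k < 0"
  proof (rule Z_matrix_mult_neg_at_minimum[OF Z wdd diag])
    show "x$k \<le> x$j" for j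
      using m_le \<open>x$k = m\<close> by simp
    show "x$k < 0"
      using m_le[of i] \<open>x$k = m\<close> \<open>\<not> 0 \<le> x$i\<close> by linarith
    show "sdd_row A k \<or> (\<exists>j. x$k < x$j \<and> A$k$j \<noteq> 0)"
    proof (cases "sdd_row A k")
      case False
      then obtain j where "j \<notin> J" and "A$k$j \<noteq> 0"
        using leak by blast
      moreover have "x$k < x$j"
        using \<open>j \<notin> J\<close> m_le[of j] \<open>x$k = m\<close> by (simp add: J_def less_le)
      ultimately show ?thesis
        by blast
    qed simp
  qed
  with Ax_nonneg[of k] show False
    by linarith
qed

lemma nonsingular_M_matrix_if_no_isolated_rows:
  fixes A :: "real^'n^'n::finite"
  assumes Z: "Z_matrix A" and wdd: "\<And>i. wdd_row A i" and diag: "\<And>i. 0 \<le> A$i$i"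
    and no_isolated: "\<And>J. J \<noteq> {} \<Longrightarrow> \<not> isolated_rows A J"
  shows "nonsingular_M_matrix A"
proof -
  note nonneg = Z_matrix_nonneg_if_mult_nonneg[OF Z wdd diag no_isolated]
  have "x = 0" if "A *v x = 0" for x
  proof -
    have "A *v (- x) = 0"
      using that matrix_vector_mult_diff_distrib[of A 0 x] by simp
    then show ?thesis
      using nonneg[of x] nonneg[of "- x"] that by (simp add: vec_eq_iff order_antisym)
  qed
  then have "invertible A"
    by (simp add: invertible_left_inverse matrix_left_invertible_ker)
  then have right_inv: "A ** matrix_inv A = mat 1"
    unfolding invertible_def matrix_inv_def by (rule someI_ex[THEN conjunct1])
  have "0 \<le> matrix_inv A $ i $ j" for i j
  proof -
    have "A *v (matrix_inv A *v axis j 1) = axis j 1"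
      by (simp add: matrix_vector_mul_assoc right_inv)
    then have "0 \<le> (matrix_inv A *v axis j 1) $ i"
      using nonneg[of "matrix_inv A *v axis j 1" i] by (simp add: axis_def)
    then show ?thesis
      by (simp add: matrix_vector_mult_basis column_def)
  qed
  with Z \<open>invertible A\<close> show ?thesis
    by (simp add: nonsingular_M_matrix_def)
qed

lemma Mterm_eq:
  "Mterm A y P X i =
    (if yhat A y P i = -\<infinity> \<or> (\<exists>j. ereal ((mat 1 - A P)$i$j) * X j = -\<infinity>) then -\<infinity>
     else (\<Sum>j\<in>UNIV. ereal ((mat 1 - A P)$i$j) * X j) + yhat A y P i)"
proof -
  have "(mat 1 - A P)$i$j = (if j = i then 1 - A P$i$i else - A P$i$j)" for j
    by (auto simp: mat_def)
  then show ?thesis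
    by (simp only: Mterm_def Let_def)
qed

lemma identity_minus_Z_matrix_nonneg:
  fixes B :: "real^'n^'n::finite"
  assumes "Z_matrix B" and "B$i$i \<le> 1"
  shows "0 \<le> (mat 1 - B)$i$j"
  using assms by (auto simp: Z_matrix_def mat_def)

lemma identity_minus_mult_row:
  fixes B :: "real^'n^'n::finite"
  shows "(\<Sum>j\<in>UNIV. (mat 1 - B)$i$j * U$j) = U$i - (B *v U)$i"
proof -
  have "(\<Sum>j\<in>UNIV. (mat 1 - B)$i$j * U$j) = ((mat 1 - B) *v U)$i"
    by (simp add: matrix_vector_mult_def)
  then show ?thesis
    by (simp add: matrix_vector_mult_diff_rdistrib)
qed

lemma identity_minus_Z_matrix_mult_shifted_row:
  fixes B :: "real^'n^'n::finite"
  assumes Z: "Z_matrix B" and "0 \<le> B$i$i" and "wdd_row B i" and "\<not> sdd_row B i"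
  shows "(\<Sum>j\<in>UNIV. (mat 1 - B)$i$j * (U$j - t)) = U$i - (B *v U)$i - t"
proof -
  have "(\<Sum>j\<in>UNIV. B$i$j) = 0"
    using assms Z_matrix_wdd_row_iff[OF Z] Z_matrix_sdd_row_iff[OF Z] by fastforce
  then have row_sum: "(\<Sum>j\<in>UNIV. (mat 1 - B)$i$j) = 1"
    by (simp add: sum_subtractf mat_def)
  have "(\<Sum>j\<in>UNIV. (mat 1 - B)$i$j * (U$j - t))
      = (\<Sum>j\<in>UNIV. (mat 1 - B)$i$j * U$j) - (\<Sum>j\<in>UNIV. (mat 1 - B)$i$j) * t"
    by (simp only: right_diff_distrib sum_subtractf sum_distrib_right)
  then show ?thesis
    by (simp only: row_sum identity_minus_mult_row mult_1)
qed

lemma Mterm_eq_sum: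
  assumes "\<not> sdd_row (A P) i" and "\<And>j. ereal ((mat 1 - A P)$i$j) * X j \<noteq> -\<infinity>"
  shows "Mterm A y P X i = (\<Sum>j\<in>UNIV. ereal ((mat 1 - A P)$i$j) * X j) + ereal (y P $ i)"
proof -
  have "yhat A y P i = ereal (y P $ i)"
    using assms(1) by (simp add: yhat_def)
  moreover have "\<not> (\<exists>j. ereal ((mat 1 - A P)$i$j) * X j = -\<infinity>)"
    using assms(2) by blast
  ultimately show ?thesis
    by (simp only: Mterm_eq MInfty_neq_ereal(1) simp_thms if_False)
qed

lemma Mterm_le:
  assumes Z: "Z_matrix (A P)" and le1: "\<not> sdd_row (A P) i \<Longrightarrow> A P$i$i \<le> 1"
    and X_le: "\<And>j. X j \<le> ereal (U$j)"
  shows "Mterm A y P X i \<le> ereal ((y P - A P *v U)$i + U$i)"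
proof (cases "sdd_row (A P) i \<or> (\<exists>j. ereal ((mat 1 - A P)$i$j) * X j = -\<infinity>)")
  case True
  then show ?thesis
    by (auto simp: Mterm_eq yhat_def)
next
  case False
  then have "0 \<le> (mat 1 - A P)$i$j" for j
    using identity_minus_Z_matrix_nonneg[OF Z le1] by blast
  then have "ereal ((mat 1 - A P)$i$j) * X j \<le> ereal ((mat 1 - A P)$i$j) * ereal (U$j)" for j
    using X_le by (intro ereal_mult_left_mono) auto
  then have "(\<Sum>j\<in>UNIV. ereal ((mat 1 - A P)$i$j) * X j)
      \<le> (\<Sum>j\<in>UNIV. ereal ((mat 1 - A P)$i$j * U$j))"
    by (intro sum_mono) simp
  also have "\<dots> = ereal (U$i - (A P *v U)$i)"
    by (simp only: sum_ereal identity_minus_mult_row)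
  finally have sum_le:
    "(\<Sum>j\<in>UNIV. ereal ((mat 1 - A P)$i$j) * X j) \<le> ereal (U$i - (A P *v U)$i)" .
  have "Mterm A y P X i = (\<Sum>j\<in>UNIV. ereal ((mat 1 - A P)$i$j) * X j) + ereal (y P $ i)"
    by (rule Mterm_eq_sum) (use False in blast)+
  also have "\<dots> \<le> ereal (U$i - (A P *v U)$i) + ereal (y P $ i)"
    using sum_le by (rule add_right_mono)
  finally show ?thesis
    by (simp add: algebra_simps)
qed

lemma isolated_row_term_ge:
  fixes B :: "real^'n^'n::finite"
  assumes Z: "Z_matrix B" and le1: "B$i$i \<le> 1" and iso: "isolated_rows B J" and "i \<in> J"
    and X_ge: "\<And>j. j \<in> J \<Longrightarrow> ereal (U$j - t) \<le> X j"
  shows "ereal ((mat 1 - B)$i$j * (U$j - t)) \<le> ereal ((mat 1 - B)$i$j) * X j"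
proof (cases "j \<in> J")
  case True
  have "ereal ((mat 1 - B)$i$j) * ereal (U$j - t) \<le> ereal ((mat 1 - B)$i$j) * X j"
    using identity_minus_Z_matrix_nonneg[OF Z le1] X_ge[OF True]
    by (intro ereal_mult_left_mono) auto
  then show ?thesis
    by simp
next
  case False
  then have "(mat 1 - B)$i$j = 0"
    using iso \<open>i \<in> J\<close> by (auto simp: isolated_rows_def mat_def)
  then show ?thesis
    by (simp add: zero_ereal_def[symmetric])
qed

lemma Mterm_ge_on_isolated_rows:
  assumes Z: "Z_matrix (A P)" and "wdd_row (A P) i" and "0 \<le> A P$i$i" and le1: "A P$i$i \<le> 1"
    and iso: "isolated_rows (A P) J" and "i \<in> J"
    and X_ge: "\<And>j. j \<in> J \<Longrightarrow> ereal (U$j - t) \<le> X j"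
  shows "ereal ((y P - A P *v U)$i + U$i - t) \<le> Mterm A y P X i"
proof -
  have not_sdd: "\<not> sdd_row (A P) i"
    using iso \<open>i \<in> J\<close> by (simp add: isolated_rows_def)
  have term_ge: "ereal ((mat 1 - A P)$i$j * (U$j - t)) \<le> ereal ((mat 1 - A P)$i$j) * X j" for j
    using Z le1 iso \<open>i \<in> J\<close> X_ge by (rule isolated_row_term_ge)
  have "ereal (U$i - (A P *v U)$i - t) = (\<Sum>j\<in>UNIV. ereal ((mat 1 - A P)$i$j * (U$j - t)))"
    by (simp only: sum_ereal identity_minus_Z_matrix_mult_shifted_row[OF Z assms(3,2) not_sdd])
  also have "\<dots> \<le> (\<Sum>j\<in>UNIV. ereal ((mat 1 - A P)$i$j) * X j)"
    by (intro sum_mono term_ge)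
  finally have sum_ge:
    "ereal (U$i - (A P *v U)$i - t) \<le> (\<Sum>j\<in>UNIV. ereal ((mat 1 - A P)$i$j) * X j)" .
  have "ereal ((y P - A P *v U)$i + U$i - t) = ereal (U$i - (A P *v U)$i - t) + ereal (y P $ i)"
    by (simp add: algebra_simps)
  also have "\<dots> \<le> (\<Sum>j\<in>UNIV. ereal ((mat 1 - A P)$i$j) * X j) + ereal (y P $ i)"
    using sum_ge by (rule add_right_mono)
  also have "\<dots> = Mterm A y P X i"
  proof (rule Mterm_eq_sum[symmetric])
    show "ereal ((mat 1 - A P)$i$j) * X j \<noteq> -\<infinity>" for j
      using term_ge[of j] by (metis MInfty_neq_ereal(1) ereal_infty_less_eq(2))
  qed (fact not_sdd)
  finally show ?thesis .
qed

lemma Mop_iterate_Suc: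
  "(Mop Ps A y ^^ Suc k) X i = (SUP P\<in>policies Ps. Mterm A y P ((Mop Ps A y ^^ k) X) i)"
  by (simp only: funpow.simps comp_apply Mop_def)

lemma Mop_iterates_le:
  assumes Z: "\<And>P. P \<in> policies Ps \<Longrightarrow> Z_matrix (A P)"
    and le1: "\<And>P i. P \<in> policies Ps \<Longrightarrow> \<not> sdd_row (A P) i \<Longrightarrow> A P$i$i \<le> 1"
    and residual_nonpos: "\<And>P i. P \<in> policies Ps \<Longrightarrow> (y P - A P *v U)$i \<le> 0"
  shows "(Mop Ps A y ^^ k) (\<lambda>j. ereal (U$j)) i \<le> ereal (U$i)"
proof (induction k arbitrary: i)
  case 0
  show ?case
    by simp
next
  case (Suc k)
  have "Mterm A y P ((Mop Ps A y ^^ k) (\<lambda>j. ereal (U$j))) i \<le> ereal (U$i)"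
    if "P \<in> policies Ps" for P
  proof -
    have "Mterm A y P ((Mop Ps A y ^^ k) (\<lambda>j. ereal (U$j))) i
        \<le> ereal ((y P - A P *v U)$i + U$i)"
      by (rule Mterm_le[where A=A and P=P, OF Z[OF that] le1[OF that] Suc.IH])
    also have "\<dots> \<le> ereal (U$i)"
      using residual_nonpos[OF that, of i] by simp
    finally show ?thesis .
  qed
  then show ?case
    by (simp only: Mop_iterate_Suc SUP_least)
qed

lemma Mop_iterates_ge_on_isolated_rows:
  assumes "P \<in> policies Ps" and Z: "Z_matrix (A P)"
    and wdd: "\<And>i. wdd_row (A P) i" and diag: "\<And>i. 0 \<le> A P$i$i"
    and le1: "\<And>i. \<not> sdd_row (A P) i \<Longrightarrow> A P$i$i \<le> 1"
    and iso: "isolated_rows (A P) J"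
    and residual_ge: "\<And>j. j \<in> J \<Longrightarrow> - d \<le> (y P - A P *v U)$j"
    and "j \<in> J"
  shows "ereal (U$j - real n * d) \<le> (Mop Ps A y ^^ n) (\<lambda>j. ereal (U$j)) j"
  using \<open>j \<in> J\<close>
proof (induction n arbitrary: j)
  case 0
  show ?case
    by simp
next
  case (Suc n)
  have "\<not> sdd_row (A P) j"
    using iso Suc.prems by (simp add: isolated_rows_def)
  have "ereal (U$j - real (Suc n) * d) \<le> ereal ((y P - A P *v U)$j + U$j - real n * d)"
    using residual_ge[OF Suc.prems] by (simp add: algebra_simps)
  also have "\<dots> \<le> Mterm A y P ((Mop Ps A y ^^ n) (\<lambda>j. ereal (U$j))) j"
    by (rule Mterm_ge_on_isolated_rows[where A=A and P=P,
          OF Z wdd diag le1[OF \<open>\<not> sdd_row (A P) j\<close>] iso Suc.prems Suc.IH])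
  also have "\<dots> \<le> (Mop Ps A y ^^ Suc n) (\<lambda>j. ereal (U$j)) j"
    unfolding Mop_iterate_Suc using \<open>P \<in> policies Ps\<close> by (rule SUP_upper)
  finally show ?case .
qed

lemma uniform_linear_margin:
  fixes x :: "'i::finite \<Rightarrow> ereal" and u :: "'i \<Rightarrow> real" and k :: "'i \<Rightarrow> nat"
  assumes "\<And>i. x i < ereal (u i)"
  shows "\<exists>e>0. \<forall>i. x i < ereal (u i - real (k i) * e)"
proof -
  have "((\<lambda>e. ereal (u i - real (k i) * e)) \<longlongrightarrow> ereal (u i)) (at_right 0)" for i
    by (intro tendsto_ereal tendsto_eq_intros) auto
  then have "\<forall>\<^sub>F e in at_right 0. x i < ereal (u i - real (k i) * e)" for i
    using assms by (rule order_tendstoD)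
  then have "\<forall>\<^sub>F e in at_right (0::real). 0 < e \<and> (\<forall>i. x i < ereal (u i - real (k i) * e))"
    by (intro eventually_conj eventually_at_right_less eventually_all_finite)
  then show ?thesis
    using eventually_happens' trivial_limit_at_right_real by blast
qed

lemma uniform_linear_drop:
  fixes f :: "nat \<Rightarrow> 'i::finite \<Rightarrow> ereal" and u :: "'i \<Rightarrow> real"
  assumes below: "\<And>m i. f m i \<le> ereal (u i)"
    and decrease: "\<And>i. \<exists>m1 m2. m1 < m2 \<and> f m2 i < f m1 i"
  shows "\<exists>k e. 0 < e \<and> (\<forall>i. f (k i) i < ereal (u i - real (k i) * e))"
proof -
  have "\<exists>m. f m i < ereal (u i)" for i
    using decrease[of i] below by (meson order_less_le_trans)
  then obtain k where "\<And>i. f (k i) i < ereal (u i)"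
    by metis
  then show ?thesis
    using uniform_linear_margin[of "\<lambda>i. f (k i) i" u k] by blast
qed

lemma exists_near_optimal_policy:
  fixes r :: "('n::finite \<Rightarrow> 'p) \<Rightarrow> real^'n"
  assumes decoupled: "\<And>P Q i. P i = Q i \<Longrightarrow> r P $ i = r Q $ i"
    and sup_zero: "\<And>i. (SUP P\<in>policies Ps. ereal (r P $ i)) = 0" and "0 < d"
  shows "\<exists>P\<in>policies Ps. \<forall>i. - d < r P $ i"
proof -
  have "\<exists>P\<in>policies Ps. - d < r P $ i" for i
  proof -
    have "ereal (- d) < (SUP P\<in>policies Ps. ereal (r P $ i))"
      using sup_zero[of i] \<open>0 < d\<close> by simp
    then show ?thesis
      by (simp add: less_SUP_iff)
  qed
  then obtain Q where Q: "\<And>i. Q i \<in> policies Ps" "\<And>i. - d < r (Q i) $ i"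
    by metis
  define P where "P j = Q j j" for j
  have "P \<in> policies Ps"
    using Q(1) by (auto simp: policies_def P_def)
  moreover have "- d < r P $ i" for i
    using Q(2)[of i] decoupled[of P i "Q i"] by (simp add: P_def)
  ultimately show ?thesis
    by blast
qed

lemma vec_tendsto_zero_squeeze:
  fixes f :: "nat \<Rightarrow> real^'n::finite"
  assumes "\<And>l i. - d l \<le> f l $ i" and "\<And>l i. f l $ i \<le> 0" and "d \<longlonglongrightarrow> 0"
  shows "f \<longlonglongrightarrow> 0"
proof (rule vec_tendstoI)
  fix i
  have "(\<lambda>l. - d l) \<longlonglongrightarrow> 0"
    using tendsto_minus[OF \<open>d \<longlonglongrightarrow> 0\<close>] by simp
  moreover have "\<forall>\<^sub>F l in sequentially. - d l \<le> f l $ i" "\<forall>\<^sub>F l in sequentially. f l $ i \<le> 0"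
    using assms(1,2) by (simp_all add: always_eventually)
  ultimately show "((\<lambda>l. f l $ i) \<longlongrightarrow> 0 $ i) sequentially"
    using tendsto_sandwich[of "\<lambda>l. - d l" "\<lambda>l. f l $ i" sequentially "\<lambda>_. 0" 0] by simp
qed

lemma nonsingular_M_matrix_of_near_optimal_policy:
  assumes "P \<in> policies Ps" and Z: "Z_matrix (A P)"
    and wdd: "\<And>i. wdd_row (A P) i" and diag: "\<And>i. 0 \<le> A P$i$i"
    and le1: "\<And>i. \<not> sdd_row (A P) i \<Longrightarrow> A P$i$i \<le> 1"
    and residual_ge: "\<And>i. - d \<le> (y P - A P *v U)$i" and "d \<le> e"
    and drop: "\<And>i. (Mop Ps A y ^^ k i) (\<lambda>j. ereal (U$j)) i < ereal (U$i - real (k i) * e)"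
  shows "nonsingular_M_matrix (A P)"
proof (rule nonsingular_M_matrix_if_no_isolated_rows[OF Z wdd diag])
  fix J :: "'a set"
  assume "J \<noteq> {}"
  then obtain i where "i \<in> J"
    by blast
  show "\<not> isolated_rows (A P) J"
  proof
    assume iso: "isolated_rows (A P) J"
    have "ereal (U$i - real (k i) * e) \<le> ereal (U$i - real (k i) * d)"
      using \<open>d \<le> e\<close> by (simp add: mult_left_mono)
    also have "\<dots> \<le> (Mop Ps A y ^^ k i) (\<lambda>j. ereal (U$j)) i"
      by (rule Mop_iterates_ge_on_isolated_rows[where A=A and P=P and y=y and U=U and d=d,
            OF \<open>P \<in> policies Ps\<close> Z wdd diag le1 iso residual_ge \<open>i \<in> J\<close>])
    finally show False
      using drop[of i] by simp
  qed
qed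

theorem lemma3p9:
  fixes Ps :: "'n::finite \<Rightarrow> 'p set"
    and A :: "('n \<Rightarrow> 'p) \<Rightarrow> real^'n^'n"
    and y :: "('n \<Rightarrow> 'p) \<Rightarrow> real^'n"
    and U :: "real^'n"
  assumes nonempty: "\<And>i. Ps i \<noteq> {}"
    and row_decoupled: "\<And>P Q i. P i = Q i \<Longrightarrow> A P $ i = A Q $ i \<and> y P $ i = y Q $ i"
    and H3: "\<And>P i. P \<in> policies Ps \<Longrightarrow>
        wdd_row (A P) i \<and> Z_matrix (A P) \<and> 0 \<le> A P $ i $ i
        \<and> (\<not> sdd_row (A P) i \<longrightarrow> A P $ i $ i \<le> 1)"
    and H4: "\<And>V i. \<exists>m1 m2. m1 < m2 \<and>
        ((Mop Ps A y ^^ m2) (\<lambda>j. ereal (V $ j)) i) < ((Mop Ps A y ^^ m1) (\<lambda>j. ereal (V $ j)) i)"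
    and bellman: "\<And>i. (SUP P\<in>policies Ps. ereal ((y P - A P *v U) $ i)) = 0"
  shows "\<exists>Pl :: nat \<Rightarrow> ('n \<Rightarrow> 'p). (\<forall>l. Pl l \<in> policies Ps)
           \<and> ((\<lambda>l. y (Pl l) - A (Pl l) *v U) \<longlonglongrightarrow> 0)
           \<and> (\<forall>l. nonsingular_M_matrix (A (Pl l)))"
proof -
  define X where "X m = (Mop Ps A y ^^ m) (\<lambda>j. ereal (U$j))" for m
  have residual_nonpos: "(y P - A P *v U)$i \<le> 0" if "P \<in> policies Ps" for P i
    using SUP_upper[OF that, of "\<lambda>P. ereal ((y P - A P *v U)$i)"] bellman[of i] by simp
  have "X m i \<le> ereal (U$i)" for m i
    unfolding X_def using H3 residual_nonpos by (intro Mop_iterates_le) blast+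
  then obtain k e where "0 < e" and drop: "\<And>i. X (k i) i < ereal (U$i - real (k i) * e)"
    using uniform_linear_drop[of X "\<lambda>i. U$i"] H4[of U] unfolding X_def by blast
  have residual_decoupled: "(y P - A P *v U)$i = (y Q - A Q *v U)$i" if "P i = Q i" for P Q i
    using row_decoupled[of P i Q, OF that] by (simp add: matrix_vector_mult_def)
  have "\<exists>P\<in>policies Ps. \<forall>i. - (e / real (Suc l)) < (y P - A P *v U)$i" for l
    using \<open>0 < e\<close>
    by (intro exists_near_optimal_policy[OF residual_decoupled bellman] divide_pos_pos) simp_all
  then obtain Pl where Pl: "\<And>l. Pl l \<in> policies Ps"
    and near: "\<And>l i. - (e / real (Suc l)) < (y (Pl l) - A (Pl l) *v U)$i"
    by metis
  have "(\<lambda>l. e / real (Suc l)) \<longlonglongrightarrow> 0"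
    using tendsto_mult_right_zero[OF LIMSEQ_inverse_real_of_nat, of e] by (simp add: divide_inverse)
  then have "(\<lambda>l. y (Pl l) - A (Pl l) *v U) \<longlonglongrightarrow> 0"
    using near residual_nonpos[OF Pl] by (intro vec_tendsto_zero_squeeze) (auto intro: less_imp_le)
  moreover have "nonsingular_M_matrix (A (Pl l))" for l
  proof (rule nonsingular_M_matrix_of_near_optimal_policy[where A=A and y=y and U=U and k=k, OF Pl])
    show "e / real (Suc l) \<le> e"
      using \<open>0 < e\<close> by (simp add: field_simps)
  qed (use H3[OF Pl[of l]] near[of l] drop in \<open>auto simp: X_def intro: less_imp_le\<close>)
  ultimately show ?thesis
    using Pl by blast
qed

end
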